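(* In the non-stationary non-deterministic bandit described in the context, satisfying the stated assumption with constants $\theta>1$, $\xi>1$, $1/2\le\eta<1$, define for each arm $i$ $$\mu_i=\mathrm{ERM}_\beta(c_i+\gamma\mu_i^{s'})=\frac1\beta\ln\Big(\mathbb{E}_{s'\sim P^i}\big[\exp(\beta(c_i+\gamma\mu_i^{s'}))\big]\Big).$$ Then for every arm $i$: 1. $\lim_{n\to\infty}\mu_{i,n}=\mu_i$; 2. there exist constants $\theta^L>1$, $\xi^L>1$, $1/2\le\eta^L<1$ such that for any $z\ge1$ and $n\in\mathbb{N}$, $$\mathbb{P}[n\hat\rho_{i,n}-n\mu_i\ge n^{\eta^L}z]\le\frac{\theta^L}{z^{\xi^L}},\qquad \mathbb{P}[n\hat\rho_{i,n}-n\mu_i\le -n^{\eta^L}z]\le\frac{\theta^L}{z^{\xi^L}},$$ with $\eta^L=\eta$, $\xi^L=\xi$, and $\theta^L$ depending on $\xi,\theta,R,\beta,|\mathcal{S}|$.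
   Context: Non-deterministic bandit with $K$ arms and finite state set $\mathcal{S}$, $\beta>0$, $\gamma\in(0,1]$. Selecting arm $i$ yields a deterministic cost $c_i\in[-R_c,R_c]$ and a next state $s'\in\mathcal{S}$ drawn independently each time from a distribution $P^i$ on $\mathcal{S}$; for each $i$ and $s'$ there is a sequence of random costs $(x^{s'}_{i,t})_{t\ge1}$ in $[-R_x,R_x]$, $x^{s'}_{i,t}$ being the cost obtained the $t$-th time state $s'$ follows arm $i$; these may be non-stationary. Let $R=R_c+R_x$. For $b>0$, $\mathrm{ERM}_b(Z)=\frac1b\ln\mathbb{E}[e^{bZ}]$. Let $\hat\rho^{s'}_{i,n}=\frac1{\beta\gamma}\ln\big(\frac1n\sum_{t=1}^n\exp(\beta\gamma x^{s'}_{i,t})\big)$ and $\mu^{s'}_{i,n}=\mathbb{E}[\hat\rho^{s'}_{i,n}]$. Assumption: for every $i$ and $s'$, $\lim_n\mu^{s'}_{i,n}=\mu^{s'}_i$ exists, and for all $z\ge1$, $n\in\mathbb{N}$: $\mathbb{P}[n\hat\rho^{s'}_{i,n}-n\mu^{s'}_i\ge n^\eta z]\le\theta/z^\xi$ and $\mathbb{P}[n\hat\rho^{s'}_{i,n}-n\mu^{s'}_i\le -n^\eta z]\le\theta/z^\xi$. Let $T^{s'}_i(n)$ be the number of times state $s'$ was sampled in the first $n$ selections of arm $i$, and $$\hat\rho_{i,n}=\frac1\beta\ln\Big(\frac1n\sum_{s'\in\mathcal{S}}\sum_{t=1}^{T^{s'}_i(n)}\exp\big(\beta(c_i+\gamma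 x^{s'}_{i,t})\big)\Big),\qquad \mu_{i,n}=\mathbb{E}[\hat\rho_{i,n}].$$ *)

theory Defs
  imports "HOL-Probability.Probability"
begin

text \<open>St k is the next state drawn at the k-th selection of the arm (k \<ge> 1);
  x s t is the cost x^{s}_{i,t} obtained the t-th time state s follows the arm (t \<ge> 1).\<close>

definition erm_arm :: "real \<Rightarrow> real \<Rightarrow> real \<Rightarrow> 's pmf \<Rightarrow> ('s \<Rightarrow> real) \<Rightarrow> real" where
  "erm_arm \<beta> \<gamma> c P muS =
     (1 / \<beta>) * ln (measure_pmf.expectation P (\<lambda>s. exp (\<beta> * (c + \<gamma> * muS s))))"

definition rho_hat_state :: "real \<Rightarrow> real \<Rightarrow> ('s \<Rightarrow> nat \<Rightarrow> 'w \<Rightarrow> real) \<Rightarrow> 's \<Rightarrow> nat \<Rightarrow> 'w \<Rightarrow> real" where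
  "rho_hat_state \<beta> \<gamma> x s n \<omega> =
     (1 / (\<beta> * \<gamma>)) * ln ((1 / real n) * (\<Sum>t = 1..n. exp (\<beta> * \<gamma> * x s t \<omega>)))"

definition state_count :: "(nat \<Rightarrow> 'w \<Rightarrow> 's) \<Rightarrow> 's \<Rightarrow> nat \<Rightarrow> 'w \<Rightarrow> nat" where
  "state_count St s n \<omega> = card {k \<in> {1..n}. St k \<omega> = s}"

definition rho_hat :: "real \<Rightarrow> real \<Rightarrow> real \<Rightarrow> ('s::finite \<Rightarrow> nat \<Rightarrow> 'w \<Rightarrow> real)
    \<Rightarrow> (nat \<Rightarrow> 'w \<Rightarrow> 's) \<Rightarrow> nat \<Rightarrow> 'w \<Rightarrow> real" where
  "rho_hat \<beta> \<gamma> c x St n \<omega> =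
     (1 / \<beta>) * ln ((1 / real n) *
        (\<Sum>s\<in>UNIV. \<Sum>t = 1..state_count St s n \<omega>. exp (\<beta> * (c + \<gamma> * x s t \<omega>))))"

definition arm_model ::
  "'w measure \<Rightarrow> real \<Rightarrow> real \<Rightarrow> real \<Rightarrow> real \<Rightarrow> 's::finite pmf
   \<Rightarrow> ('s \<Rightarrow> nat \<Rightarrow> 'w \<Rightarrow> real) \<Rightarrow> (nat \<Rightarrow> 'w \<Rightarrow> 's) \<Rightarrow> bool" where
  "arm_model M \<gamma> Rc Rx c P x St \<longleftrightarrow>
     prob_space M \<and> 0 < \<gamma> \<and> \<gamma> \<le> 1 \<and> \<bar>c\<bar> \<le> Rc \<and>
     (\<forall>s t. x s t \<in> borel_measurable M) \<and>
     (\<forall>s t. \<forall>\<omega>\<in>space M. \<bar>x s t \<omega>\<bar> \<le> Rx) \<and>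
     prob_space.indep_vars M (\<lambda>_. count_space UNIV) St {1..} \<and>
     (\<forall>k\<ge>1. distr M (count_space UNIV) (St k) = measure_pmf P) \<and>
     prob_space.indep_set M
        (sigma_sets (space M) {St k -` A \<inter> space M | k A. k \<ge> 1})
        (sigma_sets (space M) {x s t -` B \<inter> space M | s t B. B \<in> sets borel})"

definition state_assm ::
  "'w measure \<Rightarrow> real \<Rightarrow> real \<Rightarrow> ('s \<Rightarrow> nat \<Rightarrow> 'w \<Rightarrow> real) \<Rightarrow> ('s \<Rightarrow> real)
   \<Rightarrow> real \<Rightarrow> real \<Rightarrow> real \<Rightarrow> bool" where
  "state_assm M \<beta> \<gamma> x muS \<theta> \<xi> \<eta> \<longleftrightarrow>
     (\<forall>s. (\<lambda>n. integral\<^sup>L M (rho_hat_state \<beta> \<gamma> x s n)) \<longlonglongrightarrow> muS s) \<and>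
     (\<forall>s z n. z \<ge> 1 \<longrightarrow> n \<ge> 1 \<longrightarrow>
        measure M {\<omega> \<in> space M. real n * rho_hat_state \<beta> \<gamma> x s n \<omega> - real n * muS s
                                  \<ge> real n powr \<eta> * z} \<le> \<theta> / z powr \<xi> \<and>
        measure M {\<omega> \<in> space M. real n * rho_hat_state \<beta> \<gamma> x s n \<omega> - real n * muS s
                                  \<le> - (real n powr \<eta> * z)} \<le> \<theta> / z powr \<xi>)"

end

theory Submission
  imports Defs "HOL-Real_Asymp.Real_Asymp"
begin

text \<open>
  Let \<open>T\<^sub>s\<close> be the number of visits to state \<open>s\<close> among the first \<open>n\<close> pulls and \<open>r\<^sub>s\<close> the
  per-state estimator after those \<open>T\<^sub>s\<close> samples. Grouping the samples by state writes the
  estimator of the arm as the entropic risk of the values \<open>c + \<gamma> r\<^sub>s\<close> under the empirical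
  weights \<open>T\<^sub>s / n\<close>, while \<open>\<mu>\<close> is the entropic risk of \<open>c + \<gamma> \<mu>\<^sub>s\<close> under \<open>P\<close>. On bounded
  data the entropic risk is Lipschitz in the weights and in the values, so the scaled
  deviation \<open>n |\<rho>\<^sub>n - \<mu>|\<close> is at most a constant times \<open>\<Sum>\<^sub>s \<beta> T\<^sub>s |r\<^sub>s - \<mu>\<^sub>s| + |T\<^sub>s - n P(s)|\<close>.
  A deviation of order \<open>n\<^sup>\<eta> z\<close> therefore forces, for some state, either a deviation of the
  per-state estimator, which conditioning on \<open>T\<^sub>s = m\<close> reduces to the assumed tail bound
  (the counts depend only on the states, which are independent of the costs), or a
  deviation of the count \<open>T\<^sub>s\<close>, which Hoeffding's inequality bounds by a Gaussian tail in
  \<open>z\<close> because \<open>\<eta> \<ge> 1/2\<close>. As \<open>\<eta> < 1\<close> and the estimators are bounded, the tail bound also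
  yields convergence of the means.
\<close>

section \<open>Entropic risk of finite distributions\<close>

definition entropic_risk :: "real \<Rightarrow> 'a set \<Rightarrow> ('a \<Rightarrow> real) \<Rightarrow> ('a \<Rightarrow> real) \<Rightarrow> real" where
  "entropic_risk \<beta> S w a = (1 / \<beta>) * ln (\<Sum>s\<in>S. w s * exp (\<beta> * a s))"

lemma exp_neg_le_sum_weighted_exp:
  fixes \<beta> R :: real and w a :: "'a \<Rightarrow> real"
  assumes "\<beta> > 0" "\<And>s. s \<in> S \<Longrightarrow> w s \<ge> 0" "sum w S = 1" "\<And>s. s \<in> S \<Longrightarrow> \<bar>a s\<bar> \<le> R"
  shows "exp (- (\<beta> * R)) \<le> (\<Sum>s\<in>S. w s * exp (\<beta> * a s))"
proof -
  have "exp (- (\<beta> * R)) = (\<Sum>s\<in>S. w s * exp (- (\<beta> * R)))"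
    using assms(3) by (simp add: sum_distrib_right[symmetric])
  also have "\<dots> \<le> (\<Sum>s\<in>S. w s * exp (\<beta> * a s))"
  proof (intro sum_mono mult_left_mono)
    fix s assume "s \<in> S"
    have "\<beta> * (- R) \<le> \<beta> * a s"
      using assms(1) assms(4)[OF \<open>s \<in> S\<close>] by (intro mult_left_mono) (auto simp: abs_le_iff)
    then show "exp (- (\<beta> * R)) \<le> exp (\<beta> * a s)" by simp
  qed (use assms(2) in auto)
  finally show ?thesis .
qed

lemma abs_entropic_risk_le:
  fixes \<beta> R :: real and w a :: "'a \<Rightarrow> real"
  assumes "\<beta> > 0" "\<And>s. s \<in> S \<Longrightarrow> w s \<ge> 0" "sum w S = 1" "\<And>s. s \<in> S \<Longrightarrow> \<bar>a s\<bar> \<le> R"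
  shows "\<bar>entropic_risk \<beta> S w a\<bar> \<le> R"
proof -
  define E where "E = (\<Sum>s\<in>S. w s * exp (\<beta> * a s))"
  have lower: "exp (- (\<beta> * R)) \<le> E"
    unfolding E_def by (rule exp_neg_le_sum_weighted_exp[OF assms])
  have "E \<le> (\<Sum>s\<in>S. w s * exp (\<beta> * R))"
    unfolding E_def using assms by (intro sum_mono mult_left_mono) (auto simp: abs_le_iff)
  also have "\<dots> = exp (\<beta> * R)"
    using assms(3) by (simp add: sum_distrib_right[symmetric])
  finally have upper: "E \<le> exp (\<beta> * R)" .
  have "0 < E" using lower by (smt (verit) exp_gt_zero)
  with lower upper have "\<bar>ln E\<bar> \<le> \<beta> * R"
    by (smt (verit) ln_exp ln_le_cancel_iff exp_gt_zero)
  then show ?thesis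
    using assms(1) by (simp add: entropic_risk_def E_def abs_mult pos_divide_le_eq mult.commute)
qed

lemma abs_exp_diff_le:
  fixes a b K :: real
  assumes "a \<le> K" "b \<le> K"
  shows "\<bar>exp a - exp b\<bar> \<le> exp K * \<bar>a - b\<bar>"
proof -
  have *: "exp u - exp v \<le> exp K * (u - v)" if "v \<le> u" "u \<le> K" for u v :: real
  proof -
    have "exp u - exp v = exp u * (1 - exp (v - u))" by (simp add: exp_diff field_simps)
    also have "\<dots> \<le> exp u * (u - v)"
      using exp_ge_add_one_self[of "v - u"] by (intro mult_left_mono) (auto simp del: exp_ge_add_one_self)
    also have "\<dots> \<le> exp K * (u - v)" using that by (intro mult_right_mono) auto
    finally show ?thesis .
  qed
  show ?thesis
    using *[of b a] *[of a b] assms by (cases "b \<le> a") auto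
qed

lemma abs_ln_diff_le:
  fixes u v L :: real
  assumes "L > 0" "u \<ge> L" "v \<ge> L"
  shows "\<bar>ln u - ln v\<bar> \<le> \<bar>u - v\<bar> / L"
proof -
  have *: "ln u - ln v \<le> (u - v) / L" if "v \<le> u" "v \<ge> L" for u v :: real
  proof -
    have "ln u - ln v = ln (u / v)" using that assms(1) by (simp add: ln_div)
    also have "\<dots> \<le> u / v - 1" using that assms(1) by (intro ln_le_minus_one) auto
    also have "\<dots> = (u - v) / v" using that assms(1) by (simp add: field_simps)
    also have "\<dots> \<le> (u - v) / L" using that assms(1) by (intro divide_left_mono) auto
    finally show ?thesis .
  qed
  show ?thesis
    using *[of v u] *[of u v] assms by (cases "v \<le> u") (auto simp: abs_le_iff)
qed

lemma abs_weighted_exp_diff_le: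
  fixes \<beta> R w w' a b :: real
  assumes "\<beta> > 0" "w \<ge> 0" "\<bar>a\<bar> \<le> R" "\<bar>b\<bar> \<le> R"
  shows "\<bar>w * exp (\<beta> * a) - w' * exp (\<beta> * b)\<bar> \<le> exp (\<beta> * R) * (\<beta> * w * \<bar>a - b\<bar> + \<bar>w - w'\<bar>)"
proof -
  have ab: "\<beta> * a \<le> \<beta> * R" "\<beta> * b \<le> \<beta> * R"
    using assms by (simp_all add: abs_le_iff)
  define ea eb where "ea = exp (\<beta> * a)" and "eb = exp (\<beta> * b)"
  have "\<bar>w * ea - w' * eb\<bar> = \<bar>w * (ea - eb) + (w - w') * eb\<bar>"
    by (simp add: algebra_simps)
  also have "\<dots> \<le> \<bar>w * (ea - eb)\<bar> + \<bar>(w - w') * eb\<bar>"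
    by (rule abs_triangle_ineq)
  also have "\<dots> = w * \<bar>ea - eb\<bar> + \<bar>w - w'\<bar> * eb"
    using assms(2) by (simp add: abs_mult eb_def)
  also have "\<dots> \<le> w * (exp (\<beta> * R) * (\<beta> * \<bar>a - b\<bar>)) + \<bar>w - w'\<bar> * exp (\<beta> * R)"
  proof (intro add_mono mult_left_mono)
    show "\<bar>ea - eb\<bar> \<le> exp (\<beta> * R) * (\<beta> * \<bar>a - b\<bar>)"
      using abs_exp_diff_le[OF ab] assms(1) by (simp add: ea_def eb_def abs_mult right_diff_distrib[symmetric])
  qed (use ab assms(2) in \<open>auto simp: eb_def\<close>)
  finally show ?thesis by (simp add: ea_def eb_def algebra_simps)
qed

lemma abs_entropic_risk_diff_le:
  fixes \<beta> R :: real and w w' a b :: "'a \<Rightarrow> real"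
  assumes "finite S" "\<beta> > 0"
    and "\<And>s. s \<in> S \<Longrightarrow> w s \<ge> 0" "sum w S = 1" "\<And>s. s \<in> S \<Longrightarrow> \<bar>a s\<bar> \<le> R"
    and "\<And>s. s \<in> S \<Longrightarrow> w' s \<ge> 0" "sum w' S = 1" "\<And>s. s \<in> S \<Longrightarrow> \<bar>b s\<bar> \<le> R"
  shows "\<bar>entropic_risk \<beta> S w a - entropic_risk \<beta> S w' b\<bar>
    \<le> exp (2 * \<beta> * R) / \<beta> * (\<Sum>s\<in>S. \<beta> * w s * \<bar>a s - b s\<bar> + \<bar>w s - w' s\<bar>)"
proof -
  define U where "U = (\<Sum>s\<in>S. w s * exp (\<beta> * a s))"
  define V where "V = (\<Sum>s\<in>S. w' s * exp (\<beta> * b s))"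
  define L where "L = exp (- (\<beta> * R))"
  have UL: "L \<le> U" unfolding U_def L_def by (rule exp_neg_le_sum_weighted_exp) (use assms in auto)
  have VL: "L \<le> V" unfolding V_def L_def by (rule exp_neg_le_sum_weighted_exp) (use assms in auto)
  have summand: "\<bar>w s * exp (\<beta> * a s) - w' s * exp (\<beta> * b s)\<bar>
      \<le> exp (\<beta> * R) * (\<beta> * w s * \<bar>a s - b s\<bar> + \<bar>w s - w' s\<bar>)" if "s \<in> S" for s
    using assms that by (intro abs_weighted_exp_diff_le) auto
  have "\<bar>U - V\<bar> \<le> (\<Sum>s\<in>S. \<bar>w s * exp (\<beta> * a s) - w' s * exp (\<beta> * b s)\<bar>)"
    unfolding U_def V_def sum_subtractf[symmetric] by (rule sum_abs)
  also have "\<dots> \<le> exp (\<beta> * R) * (\<Sum>s\<in>S. \<beta> * w s * \<bar>a s - b s\<bar> + \<bar>w s - w' s\<bar>)"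
    unfolding sum_distrib_left by (intro sum_mono summand)
  finally have UV: "\<bar>U - V\<bar> \<le> \<dots>" .
  have "entropic_risk \<beta> S w a - entropic_risk \<beta> S w' b = (ln U - ln V) / \<beta>"
    by (simp add: entropic_risk_def U_def V_def diff_divide_distrib)
  then have "\<bar>entropic_risk \<beta> S w a - entropic_risk \<beta> S w' b\<bar> = \<bar>ln U - ln V\<bar> / \<beta>"
    using assms(2) by simp
  also have "\<dots> \<le> \<bar>U - V\<bar> / L / \<beta>"
    using abs_ln_diff_le[OF _ UL VL] assms(2) by (intro divide_right_mono) (auto simp: L_def)
  also have "\<dots> \<le> exp (\<beta> * R) * (\<Sum>s\<in>S. \<beta> * w s * \<bar>a s - b s\<bar> + \<bar>w s - w' s\<bar>) / L / \<beta>"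
    using UV assms(2) by (intro divide_right_mono) (auto simp: L_def)
  also have "\<dots> = exp (2 * \<beta> * R) / \<beta> * (\<Sum>s\<in>S. \<beta> * w s * \<bar>a s - b s\<bar> + \<bar>w s - w' s\<bar>)"
  proof -
    have "exp (\<beta> * R) / L = exp (2 * \<beta> * R)"
      unfolding L_def by (simp add: exp_minus divide_inverse flip: exp_add)
    moreover have "L > 0" unfolding L_def by simp
    ultimately show ?thesis by (simp add: field_simps)
  qed
  finally show ?thesis .
qed

lemma abs_empirical_entropic_risk_diff_le:
  fixes \<beta> R N :: real and T p a b :: "'a \<Rightarrow> real"
  assumes "finite S" "\<beta> > 0" "N > 0"
    and "\<And>s. s \<in> S \<Longrightarrow> T s \<ge> 0" "sum T S = N" "\<And>s. s \<in> S \<Longrightarrow> \<bar>a s\<bar> \<le> R"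
    and "\<And>s. s \<in> S \<Longrightarrow> p s \<ge> 0" "sum p S = 1" "\<And>s. s \<in> S \<Longrightarrow> \<bar>b s\<bar> \<le> R"
  shows "N * \<bar>entropic_risk \<beta> S (\<lambda>s. T s / N) a - entropic_risk \<beta> S p b\<bar>
    \<le> exp (2 * \<beta> * R) / \<beta> * (\<Sum>s\<in>S. \<beta> * T s * \<bar>a s - b s\<bar> + \<bar>T s - N * p s\<bar>)"
proof -
  have rescale: "N * (\<beta> * (T s / N) * \<bar>a s - b s\<bar> + \<bar>T s / N - p s\<bar>)
      = \<beta> * T s * \<bar>a s - b s\<bar> + \<bar>T s - N * p s\<bar>" for s
  proof -
    have "T s - N * p s = N * (T s / N - p s)" using assms(3) by (simp add: field_simps)
    then show ?thesis using assms(3) by (simp add: abs_mult distrib_left)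
  qed
  have "(\<Sum>s\<in>S. T s / N) = 1"
    using assms(3,5) by (simp flip: sum_divide_distrib)
  then have "\<bar>entropic_risk \<beta> S (\<lambda>s. T s / N) a - entropic_risk \<beta> S p b\<bar>
      \<le> exp (2 * \<beta> * R) / \<beta> * (\<Sum>s\<in>S. \<beta> * (T s / N) * \<bar>a s - b s\<bar> + \<bar>T s / N - p s\<bar>)"
    using assms by (intro abs_entropic_risk_diff_le) auto
  then have "N * \<bar>entropic_risk \<beta> S (\<lambda>s. T s / N) a - entropic_risk \<beta> S p b\<bar>
      \<le> N * (exp (2 * \<beta> * R) / \<beta> * (\<Sum>s\<in>S. \<beta> * (T s / N) * \<bar>a s - b s\<bar> + \<bar>T s / N - p s\<bar>))"
    using assms(3) by (intro mult_left_mono) auto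
  also have "\<dots> = exp (2 * \<beta> * R) / \<beta> * (\<Sum>s\<in>S. N * (\<beta> * (T s / N) * \<bar>a s - b s\<bar> + \<bar>T s / N - p s\<bar>))"
    by (simp only: sum_distrib_left mult.left_commute)
  finally show ?thesis by (simp only: rescale)
qed

section \<open>The estimators as entropic risks\<close>

lemma rho_hat_state_eq_entropic_risk:
  "rho_hat_state \<beta> \<gamma> x s n \<omega> = entropic_risk (\<beta> * \<gamma>) {1..n} (\<lambda>_. 1 / real n) (\<lambda>t. x s t \<omega>)"
  by (simp add: rho_hat_state_def entropic_risk_def sum_distrib_left)

lemma abs_rho_hat_state_le:
  assumes "\<beta> > 0" "\<gamma> > 0" "\<And>t. \<bar>x s t \<omega>\<bar> \<le> Rx"
  shows "\<bar>rho_hat_state \<beta> \<gamma> x s n \<omega>\<bar> \<le> Rx"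
proof (cases "n = 0")
  case True
  \<comment> \<open>\<open>1 / 0 = 0\<close> and \<open>ln 0 = 0\<close>: the estimator with no samples is \<open>0\<close>\<close>
  then show ?thesis using assms(3)[of 0] by (simp add: rho_hat_state_def)
next
  case False
  then show ?thesis
    unfolding rho_hat_state_eq_entropic_risk using assms
    by (intro abs_entropic_risk_le) auto
qed

lemma sum_exp_eq_rho_hat_state:
  assumes "\<beta> > 0" "\<gamma> > 0"
  shows "(\<Sum>t = 1..m. exp (\<beta> * \<gamma> * x s t \<omega>)) = real m * exp (\<beta> * \<gamma> * rho_hat_state \<beta> \<gamma> x s m \<omega>)"
proof (cases "m = 0")
  case False
  have "0 < (1 / real m) * (\<Sum>t = 1..m. exp (\<beta> * \<gamma> * x s t \<omega>))"
    using False by (intro mult_pos_pos sum_pos) auto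
  then have "exp (\<beta> * \<gamma> * rho_hat_state \<beta> \<gamma> x s m \<omega>) = (1 / real m) * (\<Sum>t = 1..m. exp (\<beta> * \<gamma> * x s t \<omega>))"
    using assms by (simp add: rho_hat_state_def)
  then show ?thesis using False by simp
qed simp

lemma sum_state_count:
  fixes St :: "nat \<Rightarrow> 'w \<Rightarrow> 's::finite"
  shows "(\<Sum>s\<in>UNIV. state_count St s n \<omega>) = n"
proof -
  have "(\<Sum>s\<in>UNIV. state_count St s n \<omega>) = card (\<Union>s. {k \<in> {1..n}. St k \<omega> = s})"
    unfolding state_count_def by (rule card_UN_disjoint[symmetric]) auto
  also have "(\<Union>s. {k \<in> {1..n}. St k \<omega> = s}) = {1..n}" by auto
  finally show ?thesis by simp
qed

lemma state_count_le: "state_count St s n \<omega> \<le> n"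
  unfolding state_count_def by (rule order.trans[OF card_mono[of "{1..n}"]]) auto

lemma sum_state_count_div:
  fixes St :: "nat \<Rightarrow> 'w \<Rightarrow> 's::finite"
  assumes "n \<ge> 1"
  shows "(\<Sum>s\<in>UNIV. real (state_count St s n \<omega>) / real n) = 1"
  using assms sum_state_count[of St n \<omega>] by (simp flip: sum_divide_distrib of_nat_sum)

lemma of_nat_mult_abs_diff: "real n * \<bar>u - v\<bar> = \<bar>real n * u - real n * v\<bar>"
  by (simp add: abs_mult flip: right_diff_distrib)

lemma abs_add_scaled_le:
  fixes c v \<gamma> :: real
  assumes "\<bar>c\<bar> \<le> Rc" "\<bar>v\<bar> \<le> Rx" "0 \<le> \<gamma>" "\<gamma> \<le> 1"
  shows "\<bar>c + \<gamma> * v\<bar> \<le> Rc + Rx"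
proof -
  have "\<bar>\<gamma> * v\<bar> \<le> \<bar>v\<bar>" using assms(3,4) by (simp add: abs_mult mult_left_le_one_le)
  then show ?thesis using assms(1,2) abs_triangle_ineq[of c "\<gamma> * v"] by linarith
qed

lemma rho_hat_eq_entropic_risk:
  assumes "\<beta> > 0" "\<gamma> > 0"
  shows "rho_hat \<beta> \<gamma> c x St n \<omega> = entropic_risk \<beta> UNIV
      (\<lambda>s. real (state_count St s n \<omega>) / real n)
      (\<lambda>s. c + \<gamma> * rho_hat_state \<beta> \<gamma> x s (state_count St s n \<omega>) \<omega>)"
proof -
  have "(\<Sum>t = 1..m. exp (\<beta> * (c + \<gamma> * x s t \<omega>)))
      = real m * exp (\<beta> * (c + \<gamma> * rho_hat_state \<beta> \<gamma> x s m \<omega>))" for s m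
    using sum_exp_eq_rho_hat_state[OF assms, where m=m and x=x and s=s and \<omega>=\<omega>]
    by (simp add: distrib_left exp_add mult.assoc flip: sum_distrib_left)
  then show ?thesis
    by (simp add: rho_hat_def entropic_risk_def sum_distrib_left)
qed

lemma erm_arm_eq_entropic_risk:
  fixes P :: "'s::finite pmf"
  shows "erm_arm \<beta> \<gamma> c P muS = entropic_risk \<beta> UNIV (pmf P) (\<lambda>s. c + \<gamma> * muS s)"
  unfolding erm_arm_def entropic_risk_def
  by (subst integral_measure_pmf_real[where A=UNIV]) (auto simp: mult.commute)

lemma rho_hat_deviation_le:
  fixes x :: "'s::finite \<Rightarrow> nat \<Rightarrow> 'w \<Rightarrow> real" and P :: "'s pmf"
  assumes "\<beta> > 0" "\<gamma> > 0" "\<gamma> \<le> 1" "\<bar>c\<bar> \<le> Rc" "n \<ge> 1"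
    and "\<And>s t. \<bar>x s t \<omega>\<bar> \<le> Rx" "\<And>s. \<bar>muS s\<bar> \<le> Rx"
  shows "real n * \<bar>rho_hat \<beta> \<gamma> c x St n \<omega> - erm_arm \<beta> \<gamma> c P muS\<bar>
    \<le> exp (2 * \<beta> * (Rc + Rx)) / \<beta> *
       (\<Sum>s\<in>UNIV. \<beta> * real (state_count St s n \<omega>) *
            \<bar>rho_hat_state \<beta> \<gamma> x s (state_count St s n \<omega>) \<omega> - muS s\<bar>
          + \<bar>real (state_count St s n \<omega>) - real n * pmf P s\<bar>)"
proof -
  define T where "T s = real (state_count St s n \<omega>)" for s
  define r where "r s = rho_hat_state \<beta> \<gamma> x s (state_count St s n \<omega>) \<omega>" for s
  have "\<bar>r s\<bar> \<le> Rx" for s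
    unfolding r_def by (rule abs_rho_hat_state_le) (use assms in auto)
  then have "real n * \<bar>rho_hat \<beta> \<gamma> c x St n \<omega> - erm_arm \<beta> \<gamma> c P muS\<bar>
      \<le> exp (2 * \<beta> * (Rc + Rx)) / \<beta> *
         (\<Sum>s\<in>UNIV. \<beta> * T s * \<bar>(c + \<gamma> * r s) - (c + \<gamma> * muS s)\<bar> + \<bar>T s - real n * pmf P s\<bar>)"
    unfolding rho_hat_eq_entropic_risk[OF assms(1,2)] erm_arm_eq_entropic_risk T_def r_def
    using assms sum_state_count[of St n \<omega>] sum_pmf_eq_1[of UNIV P]
    by (intro abs_empirical_entropic_risk_diff_le abs_add_scaled_le)
       (auto simp: T_def r_def simp flip: of_nat_sum)
  also have "\<dots> \<le> exp (2 * \<beta> * (Rc + Rx)) / \<beta> *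
         (\<Sum>s\<in>UNIV. \<beta> * T s * \<bar>r s - muS s\<bar> + \<bar>T s - real n * pmf P s\<bar>)"
    using assms(1-3)
    by (intro mult_left_mono sum_mono add_mono)
       (auto simp: T_def abs_mult mult_left_le_one_le simp flip: right_diff_distrib)
  finally show ?thesis unfolding T_def r_def .
qed

lemma measurable_sigma_of_preimages:
  assumes "G \<subseteq> Pow \<Omega>" "f \<in> \<Omega> \<rightarrow> space N" "\<And>A. A \<in> sets N \<Longrightarrow> f -` A \<inter> \<Omega> \<in> G"
  shows "f \<in> measurable (sigma \<Omega> G) N"
  using assms by (auto intro!: measurableI)

lemma state_count_eq_sum_indicator:
  "real (state_count St s n \<omega>) = (\<Sum>k\<in>{1..n}. if St k \<omega> = s then 1 else 0)"
proof -
  have "{k \<in> {1..n}. St k \<omega> = s} = {1..n} \<inter> {k. St k \<omega> = s}" by auto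
  then show ?thesis unfolding state_count_def by (simp add: sum.If_cases)
qed

lemma state_count_borel_measurable:
  assumes "\<And>k. k \<in> {1..n} \<Longrightarrow> St k \<in> measurable N (count_space UNIV)"
  shows "(\<lambda>\<omega>. real (state_count St s n \<omega>)) \<in> borel_measurable N"
  unfolding state_count_eq_sum_indicator
proof (rule borel_measurable_sum)
  fix k assume "k \<in> {1..n}"
  have "(\<lambda>y. if y = s then 1 else 0 :: real) \<circ> St k \<in> borel_measurable N"
    using assms[OF \<open>k \<in> {1..n}\<close>] by (intro measurable_comp) auto
  then show "(\<lambda>\<omega>. if St k \<omega> = s then 1 else 0 :: real) \<in> borel_measurable N"
    by (simp add: comp_def)
qed

lemma rho_hat_state_borel_measurable:
  assumes "\<And>t. x s t \<in> borel_measurable N"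
  shows "(\<lambda>\<omega>. rho_hat_state \<beta> \<gamma> x s m \<omega>) \<in> borel_measurable N"
  unfolding rho_hat_state_def using assms by measurable

lemma rho_hat_borel_measurable:
  fixes x :: "'s::finite \<Rightarrow> nat \<Rightarrow> 'w \<Rightarrow> real"
  assumes "\<And>s t. x s t \<in> borel_measurable N"
    and "\<And>k. k \<in> {1..n} \<Longrightarrow> St k \<in> measurable N (count_space UNIV)"
  shows "(\<lambda>\<omega>. rho_hat \<beta> \<gamma> c x St n \<omega>) \<in> borel_measurable N"
proof -
  have truncate: "(\<Sum>t = 1..state_count St s n \<omega>. f t)
      = (\<Sum>t\<in>{1..n}. if real t \<le> real (state_count St s n \<omega>) then f t else 0)" for s \<omega> and f :: "nat \<Rightarrow> real"
  proof -
    have "{t \<in> {1..n}. real t \<le> real (state_count St s n \<omega>)} = {1..state_count St s n \<omega>}"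
      using state_count_le[of St s n \<omega>] by auto
    then show ?thesis by (simp add: sum.inter_filter[symmetric])
  qed
  note [measurable] = assms(1) state_count_borel_measurable[OF assms(2)]
  show ?thesis
    unfolding rho_hat_def truncate by measurable
qed

lemma exp_neg_mult_square_le:
  fixes a p z :: real
  assumes "a > 0" "p > 0" "z > 0"
  shows "exp (- (a * z\<^sup>2)) \<le> (p / a) powr p / z powr (2 * p)"
proof -
  define y where "y = a * z\<^sup>2 / p"
  have "y > 0" unfolding y_def using assms by simp
  have "z\<^sup>2 powr p = z powr (2 * p)"
    using powr_powr[of z 2 p] assms(3) by simp
  moreover have "y = (a / p) * z\<^sup>2"
    by (simp add: y_def)
  ultimately have "y powr p = (a / p) powr p * z powr (2 * p)"
    by (simp only: powr_mult)
  moreover have "y powr p \<le> exp (a * z\<^sup>2)"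
  proof -
    have "y powr p \<le> exp y powr p"
      using \<open>y > 0\<close> assms(2) exp_ge_add_one_self[of y] by (intro powr_mono2) linarith+
    also have "\<dots> = exp (a * z\<^sup>2)"
      using assms(2) by (simp add: y_def exp_powr_real)
    finally show ?thesis .
  qed
  ultimately have "(a / p) powr p * z powr (2 * p) \<le> exp (a * z\<^sup>2)" by simp
  moreover have "(a / p) powr p * z powr (2 * p) > 0" using assms by simp
  ultimately show ?thesis
    using assms by (simp add: exp_minus powr_divide field_simps)
qed

lemma sum_ge_imp_summand_ge:
  fixes f :: "'a \<Rightarrow> real"
  assumes "finite S" "S \<noteq> {}" "w \<le> (\<Sum>s\<in>S. f s)"
  shows "\<exists>s\<in>S. w / real (card S) \<le> f s"
proof (rule ccontr)
  assume "\<not> ?thesis"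
  then have "(\<Sum>s\<in>S. f s) < (\<Sum>s\<in>S. w / real (card S))"
    using assms(1,2) by (intro sum_strict_mono) auto
  also have "\<dots> = w" using assms(1,2) by simp
  finally show False using assms(3) by simp
qed

context prob_space
begin

lemma prob_UN_indep_le:
  assumes "finite I" "disjoint_family_on A I" "0 \<le> b"
    and "\<And>m. m \<in> I \<Longrightarrow> A m \<in> events" "\<And>m. m \<in> I \<Longrightarrow> F m \<in> events"
    and "\<And>m. m \<in> I \<Longrightarrow> prob (A m \<inter> F m) = prob (A m) * prob (F m)"
    and "\<And>m. m \<in> I \<Longrightarrow> prob (F m) \<le> b"
  shows "prob (\<Union>m\<in>I. A m \<inter> F m) \<le> b"
proof -
  have "prob (\<Union>m\<in>I. A m \<inter> F m) \<le> (\<Sum>m\<in>I. prob (A m \<inter> F m))"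
    using assms(4,5) by (intro finite_measure_subadditive_finite[OF assms(1)]) auto
  also have "\<dots> \<le> (\<Sum>m\<in>I. prob (A m) * b)"
    using assms(6,7) by (intro sum_mono) (simp add: mult_left_mono)
  also have "\<dots> = prob (\<Union>m\<in>I. A m) * b"
    using assms(1,2,4) by (simp add: finite_measure_finite_Union sum_distrib_right image_subset_iff)
  also have "\<dots> \<le> b"
    using assms(3) by (simp add: mult_left_le_one_le)
  finally show ?thesis .
qed

lemma abs_expectation_diff_le:
  fixes f :: "'a \<Rightarrow> real"
  assumes [measurable]: "f \<in> borel_measurable M"
    and bound: "\<And>\<omega>. \<omega> \<in> space M \<Longrightarrow> \<bar>f \<omega> - \<mu>\<bar> \<le> D" and "\<epsilon> \<ge> 0"
  shows "\<bar>expectation f - \<mu>\<bar> \<le> \<epsilon> + D * prob {\<omega> \<in> space M. \<epsilon> \<le> \<bar>f \<omega> - \<mu>\<bar>}"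
proof -
  define G where "G = {\<omega> \<in> space M. \<epsilon> \<le> \<bar>f \<omega> - \<mu>\<bar>}"
  have [measurable]: "G \<in> events" unfolding G_def by measurable
  have "\<bar>f \<omega>\<bar> \<le> \<bar>\<mu>\<bar> + D" if "\<omega> \<in> space M" for \<omega>
    using bound[OF that] abs_triangle_ineq[of "f \<omega> - \<mu>" \<mu>] by simp
  then have "integrable M f"
    by (intro integrable_const_bound[where B="\<bar>\<mu>\<bar> + D"] AE_I2) auto
  then have "\<bar>expectation f - \<mu>\<bar> = \<bar>expectation (\<lambda>\<omega>. f \<omega> - \<mu>)\<bar>"
    by (simp add: prob_space)
  also have "\<dots> \<le> expectation (\<lambda>\<omega>. \<bar>f \<omega> - \<mu>\<bar>)"
    by (rule integral_abs_bound)
  also have "\<dots> \<le> expectation (\<lambda>\<omega>. \<epsilon> + D * indicator G \<omega>)"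
  proof (rule integral_mono)
    show "integrable M (\<lambda>\<omega>. \<bar>f \<omega> - \<mu>\<bar>)"
      using \<open>integrable M f\<close> by auto
    show "\<bar>f \<omega> - \<mu>\<bar> \<le> \<epsilon> + D * indicator G \<omega>" if "\<omega> \<in> space M" for \<omega>
      using bound[OF that] that \<open>\<epsilon> \<ge> 0\<close> by (auto simp: G_def indicator_def)
  qed (auto simp: less_top[symmetric])
  also have "\<dots> = \<epsilon> + D * prob G"
    by (subst Bochner_Integration.integral_add) (auto simp: prob_space less_top[symmetric])
  finally show ?thesis unfolding G_def .
qed

lemma expectation_tendsto_of_tail_bound:
  fixes f :: "nat \<Rightarrow> 'a \<Rightarrow> real"
  assumes meas: "\<And>n. f n \<in> borel_measurable M"
    and bound: "\<And>n \<omega>. n \<ge> 1 \<Longrightarrow> \<omega> \<in> space M \<Longrightarrow> \<bar>f n \<omega> - \<mu>\<bar> \<le> D"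
    and tail: "\<And>n z. n \<ge> 1 \<Longrightarrow> z \<ge> 1 \<Longrightarrow>
      prob {\<omega> \<in> space M. real n powr \<eta> * z \<le> real n * \<bar>f n \<omega> - \<mu>\<bar>} \<le> C / z powr \<xi>"
    and "\<eta> < 1" "\<xi> > 0"
  shows "(\<lambda>n. expectation (f n)) \<longlonglongrightarrow> \<mu>"
proof (rule tendstoI)
  fix r :: real assume "r > 0"
  define \<epsilon> where "\<epsilon> = r / 2"
  have "\<epsilon> > 0" using \<open>r > 0\<close> by (simp add: \<epsilon>_def)
  define z where "z n = \<epsilon> * real n powr (1 - \<eta>)" for n
  have "(\<lambda>n. D * (C / z n powr \<xi>)) \<longlonglongrightarrow> D * (C * 0)"
    using \<open>\<epsilon> > 0\<close> \<open>\<eta> < 1\<close> \<open>\<xi> > 0\<close> unfolding z_def by (intro tendsto_intros) real_asymp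
  then have "eventually (\<lambda>n. D * (C / z n powr \<xi>) < \<epsilon>) sequentially"
    using \<open>\<epsilon> > 0\<close> by (intro order_tendstoD) auto
  moreover have "eventually (\<lambda>n. 1 \<le> z n \<and> n \<ge> 1) sequentially"
    using \<open>\<epsilon> > 0\<close> \<open>\<eta> < 1\<close> unfolding z_def by (intro eventually_conj) (real_asymp, simp)
  ultimately show "eventually (\<lambda>n. dist (expectation (f n)) \<mu> < r) sequentially"
  proof eventually_elim
    case (elim n)
    have "real n powr \<eta> * z n = \<epsilon> * real n"
      using elim by (simp add: z_def mult.left_commute flip: powr_add)
    then have "{\<omega> \<in> space M. \<epsilon> \<le> \<bar>f n \<omega> - \<mu>\<bar>}
        = {\<omega> \<in> space M. real n powr \<eta> * z n \<le> real n * \<bar>f n \<omega> - \<mu>\<bar>}"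
      using elim by (auto simp: mult.commute)
    then have "prob {\<omega> \<in> space M. \<epsilon> \<le> \<bar>f n \<omega> - \<mu>\<bar>} \<le> C / z n powr \<xi>"
      using tail[of n "z n"] elim by simp
    moreover obtain \<omega> where "\<omega> \<in> space M" using not_empty by blast
    then have "D \<ge> 0" using bound[of n \<omega>] elim by linarith
    ultimately have "D * prob {\<omega> \<in> space M. \<epsilon> \<le> \<bar>f n \<omega> - \<mu>\<bar>} \<le> D * (C / z n powr \<xi>)"
      by (rule mult_left_mono)
    then have "\<bar>expectation (f n) - \<mu>\<bar> \<le> \<epsilon> + D * (C / z n powr \<xi>)"
      using abs_expectation_diff_le[OF meas bound, of n \<epsilon>] elim \<open>\<epsilon> > 0\<close> by linarith
    then have "\<bar>expectation (f n) - \<mu>\<bar> < r"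
      using elim \<epsilon>_def by linarith
    then show ?case by (simp add: dist_real_def)
  qed
qed

lemma state_count_hoeffding:
  assumes "indep_vars (\<lambda>_. count_space UNIV) X {1..n}"
    and "\<And>k. k \<in> {1..n} \<Longrightarrow> distr M (count_space UNIV) (X k) = measure_pmf P"
    and "n \<ge> 1" "\<epsilon> \<ge> 0"
  shows "prob {\<omega> \<in> space M. \<epsilon> \<le> \<bar>real (state_count X s n \<omega>) - real n * pmf P s\<bar>}
           \<le> 2 * exp (-2 * \<epsilon>\<^sup>2 / real n)"
proof -
  define Y where "Y k \<omega> = (if X k \<omega> = s then 1 else (0::real))" for k \<omega>
  have "indep_vars (\<lambda>_. borel) Y {1..n}"
    unfolding Y_def by (rule indep_vars_compose2[OF assms(1)]) auto
  then interpret Y: Hoeffding_ineq M "{1..n}" Y "\<lambda>_. 0" "\<lambda>_. 1" "\<Sum>k\<in>{1..n}. expectation (Y k)"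
    by unfold_locales (auto simp: Y_def)
  have "expectation (Y k) = pmf P s" if "k \<in> {1..n}" for k
  proof -
    have "expectation (Y k) = (\<integral>y. (if y = s then 1 else (0::real)) \<partial>distr M (count_space UNIV) (X k))"
      unfolding Y_def
      using assms(1) that by (subst integral_distr) (auto simp: indep_vars_def)
    also have "\<dots> = pmf P s"
      unfolding assms(2)[OF that] by (subst integral_measure_pmf_real[where A="{s}"]) (auto split: if_splits)
    finally show ?thesis .
  qed
  then have "(\<Sum>k\<in>{1..n}. expectation (Y k)) = real n * pmf P s"
    by simp
  moreover have "(\<Sum>k\<in>{1..n}. Y k \<omega>) = real (state_count X s n \<omega>)" for \<omega>
    unfolding Y_def state_count_eq_sum_indicator ..
  moreover have "prob {\<omega> \<in> space M. \<epsilon> \<le> \<bar>(\<Sum>k\<in>{1..n}. Y k \<omega>) - (\<Sum>k\<in>{1..n}. expectation (Y k))\<bar>}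
        \<le> 2 * exp (-2 * \<epsilon>\<^sup>2 / (\<Sum>k\<in>{1..n}. (1 - 0)\<^sup>2))"
    using assms(3) by (intro Y.Hoeffding_ineq_abs_ge[OF assms(4)]) auto
  ultimately show ?thesis by simp
qed

end

section \<open>Concentration of the estimator of one arm\<close>

text \<open>
  A deviation \<open>n\<^sup>\<eta> z\<close> of the arm forces one of the \<open>2 N\<close> summands of the pointwise bound,
  whose constant is \<open>e\<^sup>2\<^sup>\<beta>\<^sup>R / \<beta>\<close>, to exceed \<open>\<beta> n\<^sup>\<eta> z / deviation_scale N \<beta> R\<close>.
\<close>

definition deviation_scale :: "real \<Rightarrow> real \<Rightarrow> real \<Rightarrow> real" where
  "deviation_scale N \<beta> R = 2 * N * exp (2 * \<beta> * R)"

definition tail_const :: "real \<Rightarrow> real \<Rightarrow> real \<Rightarrow> real \<Rightarrow> real \<Rightarrow> real" where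
  "tail_const N \<beta> R \<theta> \<xi> =
     N * (2 * \<theta> * deviation_scale N \<beta> R powr \<xi>
          + 2 * (\<xi> / (4 * (\<beta> / deviation_scale N \<beta> R)\<^sup>2)) powr (\<xi> / 2))"

lemma deviation_scale_ge_1:
  assumes "N \<ge> 1" "\<beta> > 0" "R \<ge> 0"
  shows "deviation_scale N \<beta> R \<ge> 1"
proof -
  have "1 \<le> exp (2 * \<beta> * R)" using assms(2,3) by simp
  then have "1 * 1 \<le> (2 * N) * exp (2 * \<beta> * R)"
    using assms(1) by (intro mult_mono) auto
  then show ?thesis by (simp add: deviation_scale_def)
qed

lemma tail_const_ge:
  assumes "N \<ge> 1" "\<theta> \<ge> 0"
  shows "tail_const N \<beta> R \<theta> \<xi> \<ge> 2 * \<theta> * deviation_scale N \<beta> R powr \<xi>"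
proof -
  define B where "B = 2 * (\<xi> / (4 * (\<beta> / deviation_scale N \<beta> R)\<^sup>2)) powr (\<xi> / 2)"
  have "2 * \<theta> * deviation_scale N \<beta> R powr \<xi> \<le> 1 * (2 * \<theta> * deviation_scale N \<beta> R powr \<xi> + B)"
    using assms by (simp add: B_def)
  also have "\<dots> \<le> N * (2 * \<theta> * deviation_scale N \<beta> R powr \<xi> + B)"
    using assms by (intro mult_right_mono) (auto simp: B_def)
  finally show ?thesis
    by (simp add: tail_const_def B_def)
qed

lemma tail_const_gt_1:
  assumes "N \<ge> 1" "\<beta> > 0" "R \<ge> 0" "\<theta> > 1" "\<xi> > 0"
  shows "tail_const N \<beta> R \<theta> \<xi> > 1"
proof -
  have "1 \<le> deviation_scale N \<beta> R powr \<xi>"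
    using deviation_scale_ge_1[OF assms(1-3)] assms(5) by (simp add: ge_one_powr_ge_zero)
  then have "2 * \<theta> * 1 \<le> 2 * \<theta> * deviation_scale N \<beta> R powr \<xi>"
    using assms(4) by (intro mult_left_mono) auto
  then show ?thesis
    using tail_const_ge[OF assms(1), of \<theta> \<beta> R \<xi>] assms(4) by linarith
qed

locale bandit_arm = prob_space M for M :: "'w measure" +
  fixes \<beta> \<gamma> Rc Rx c :: real and P :: "'s::finite pmf" and x :: "'s \<Rightarrow> nat \<Rightarrow> 'w \<Rightarrow> real"
    and St :: "nat \<Rightarrow> 'w \<Rightarrow> 's" and muS :: "'s \<Rightarrow> real" and \<theta> \<xi> \<eta> :: real
  assumes \<beta>_pos: "\<beta> > 0" and \<gamma>_pos: "\<gamma> > 0" and \<gamma>_le_1: "\<gamma> \<le> 1" and c_bound: "\<bar>c\<bar> \<le> Rc"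
    and \<theta>_gt_1: "\<theta> > 1" and \<xi>_gt_1: "\<xi> > 1" and \<eta>_ge: "1/2 \<le> \<eta>" and \<eta>_lt_1: "\<eta> < 1"
    and x_measurable: "\<And>s t. x s t \<in> borel_measurable M"
    and x_bound: "\<And>s t \<omega>. \<omega> \<in> space M \<Longrightarrow> \<bar>x s t \<omega>\<bar> \<le> Rx"
    and St_indep: "indep_vars (\<lambda>_. count_space UNIV) St {1..}"
    and St_distr: "\<And>k. k \<ge> 1 \<Longrightarrow> distr M (count_space UNIV) (St k) = measure_pmf P"
    and states_indep_costs: "indep_set
        (sigma_sets (space M) {St k -` A \<inter> space M | k A. k \<ge> 1})
        (sigma_sets (space M) {x s t -` B \<inter> space M | s t B. B \<in> sets borel})"
    and state_estimator_limit: "\<And>s. (\<lambda>n. expectation (rho_hat_state \<beta> \<gamma> x s n)) \<longlonglongrightarrow> muS s"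
    and state_estimator_tail: "\<And>s z n. z \<ge> 1 \<Longrightarrow> n \<ge> 1 \<Longrightarrow>
        prob {\<omega> \<in> space M. real n * rho_hat_state \<beta> \<gamma> x s n \<omega> - real n * muS s
                              \<ge> real n powr \<eta> * z} \<le> \<theta> / z powr \<xi> \<and>
        prob {\<omega> \<in> space M. real n * rho_hat_state \<beta> \<gamma> x s n \<omega> - real n * muS s
                              \<le> - (real n powr \<eta> * z)} \<le> \<theta> / z powr \<xi>"
begin

abbreviation "state_generators \<equiv> {St k -` A \<inter> space M | k A. k \<ge> 1}"
abbreviation "cost_generators \<equiv> {x s t -` B \<inter> space M | s t B. B \<in> sets borel}"

definition count_event :: "'s \<Rightarrow> nat \<Rightarrow> nat \<Rightarrow> 'w set" where
  "count_event s n m = {\<omega> \<in> space M. state_count St s n \<omega> = m}"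

definition state_deviation_event :: "'s \<Rightarrow> nat \<Rightarrow> real \<Rightarrow> 'w set" where
  "state_deviation_event s m z =
     {\<omega> \<in> space M. real m powr \<eta> * z \<le> real m * \<bar>rho_hat_state \<beta> \<gamma> x s m \<omega> - muS s\<bar>}"

definition count_deviation_event :: "'s \<Rightarrow> nat \<Rightarrow> real \<Rightarrow> 'w set" where
  "count_deviation_event s n \<epsilon> =
     {\<omega> \<in> space M. \<epsilon> \<le> \<bar>real (state_count St s n \<omega>) - real n * pmf P s\<bar>}"

definition bad_state_event :: "'s \<Rightarrow> nat \<Rightarrow> real \<Rightarrow> 'w set" where
  "bad_state_event s n z =
     (\<Union>m\<in>{1..n}. count_event s n m \<inter>
        state_deviation_event s m (z / deviation_scale (real CARD('s)) \<beta> (Rc + Rx)))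
     \<union> count_deviation_event s n
        (\<beta> / deviation_scale (real CARD('s)) \<beta> (Rc + Rx) * (real n powr \<eta> * z))"

lemma Rx_nonneg: "Rx \<ge> 0"
proof -
  obtain \<omega> where "\<omega> \<in> space M" using not_empty by blast
  then show ?thesis using x_bound[of \<omega> undefined 0] by linarith
qed

lemma St_measurable: "k \<ge> 1 \<Longrightarrow> St k \<in> measurable M (count_space UNIV)"
  using St_indep unfolding indep_vars_def by auto

lemma count_event_in_state_events:
  "count_event s n m \<in> sigma_sets (space M) state_generators"
proof -
  let ?S = "sigma (space M) state_generators"
  have sets_S: "sets ?S = sigma_sets (space M) state_generators"
    by (rule sets_measure_of) auto
  have "St k \<in> measurable ?S (count_space UNIV)" if "k \<in> {1..n}" for k
    using that by (intro measurable_sigma_of_preimages) auto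
  then have "(\<lambda>\<omega>. real (state_count St s n \<omega>)) \<in> borel_measurable ?S"
    by (rule state_count_borel_measurable)
  from measurable_sets[OF this, of "{real m}"]
  show ?thesis
    unfolding sets_S count_event_def space_measure_of_conv by (simp add: vimage_def Int_def conj_commute)
qed

lemma state_deviation_event_in_cost_events:
  "state_deviation_event s m z \<in> sigma_sets (space M) cost_generators"
proof -
  let ?X = "sigma (space M) cost_generators"
  have sets_X: "sets ?X = sigma_sets (space M) cost_generators"
    by (rule sets_measure_of) auto
  have "x s t \<in> borel_measurable ?X" for t
    by (intro measurable_sigma_of_preimages) auto
  note [measurable] = rho_hat_state_borel_measurable[where x=x and s=s, OF this]
  have "{\<omega> \<in> space ?X. real m powr \<eta> * z \<le> real m * \<bar>rho_hat_state \<beta> \<gamma> x s m \<omega> - muS s\<bar>} \<in> sets ?X"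
    by measurable
  then show ?thesis
    unfolding sets_X state_deviation_event_def space_measure_of_conv .
qed

lemma count_event_indep_state_deviation_event:
  "prob (count_event s n m \<inter> state_deviation_event s' m' z)
     = prob (count_event s n m) * prob (state_deviation_event s' m' z)"
  by (rule indep_setD[OF states_indep_costs count_event_in_state_events
        state_deviation_event_in_cost_events])

lemma count_event_sets: "count_event s n m \<in> events"
  using count_event_in_state_events indep_setD_ev1[OF states_indep_costs] by blast

lemma state_deviation_event_sets: "state_deviation_event s m z \<in> events"
  using state_deviation_event_in_cost_events indep_setD_ev2[OF states_indep_costs] by blast

lemma muS_bound: "\<bar>muS s\<bar> \<le> Rx"
proof -
  have "\<bar>expectation (rho_hat_state \<beta> \<gamma> x s n)\<bar> \<le> Rx" for n
  proof -
    have "\<bar>expectation (rho_hat_state \<beta> \<gamma> x s n)\<bar> \<le> expectation (\<lambda>\<omega>. \<bar>rho_hat_state \<beta> \<gamma> x s n \<omega>\<bar>)"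
      by (rule integral_abs_bound)
    also have "\<dots> \<le> expectation (\<lambda>_. Rx)"
      using \<beta>_pos \<gamma>_pos x_bound Rx_nonneg
      by (intro integral_mono') (auto intro!: abs_rho_hat_state_le)
    finally show ?thesis by (simp add: prob_space)
  qed
  then show ?thesis
    by (intro tendsto_upperbound[OF tendsto_rabs[OF state_estimator_limit]]) auto
qed

lemma prob_state_deviation_event_le:
  assumes "z \<ge> 1" "m \<ge> 1"
  shows "prob (state_deviation_event s m z) \<le> 2 * \<theta> / z powr \<xi>"
proof -
  note [measurable] = rho_hat_state_borel_measurable[OF x_measurable]
  let ?up = "{\<omega> \<in> space M. real m * rho_hat_state \<beta> \<gamma> x s m \<omega> - real m * muS s \<ge> real m powr \<eta> * z}"
  let ?down = "{\<omega> \<in> space M. real m * rho_hat_state \<beta> \<gamma> x s m \<omega> - real m * muS s \<le> - (real m powr \<eta> * z)}"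
  have "state_deviation_event s m z \<subseteq> ?up \<union> ?down"
    using of_nat_mult_abs_diff[of m]
    by (auto simp: state_deviation_event_def abs_if split: if_splits)
  then have "prob (state_deviation_event s m z) \<le> prob (?up \<union> ?down)"
    by (intro finite_measure_mono) measurable
  also have "\<dots> \<le> prob ?up + prob ?down"
    by (rule measure_Un_le) measurable
  also have "\<dots> \<le> \<theta> / z powr \<xi> + \<theta> / z powr \<xi>"
    using state_estimator_tail[OF assms] by (intro add_mono) auto
  finally show ?thesis by simp
qed

lemma prob_state_deviation_at_count_le:
  assumes "z \<ge> 1"
  shows "prob (\<Union>m\<in>{1..n}. count_event s n m \<inter> state_deviation_event s m z) \<le> 2 * \<theta> / z powr \<xi>"
  using \<theta>_gt_1 assms
  by (intro prob_UN_indep_le count_event_sets state_deviation_event_sets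
        count_event_indep_state_deviation_event prob_state_deviation_event_le)
     (auto simp: disjoint_family_on_def count_event_def)

lemma prob_count_deviation_le:
  assumes "n \<ge> 1" "\<epsilon> > 0" "z > 0"
  shows "prob (count_deviation_event s n (\<epsilon> * (real n powr \<eta> * z)))
           \<le> 2 * (\<xi> / (4 * \<epsilon>\<^sup>2)) powr (\<xi> / 2) / z powr \<xi>"
proof -
  have "prob (count_deviation_event s n (\<epsilon> * (real n powr \<eta> * z)))
      \<le> 2 * exp (-2 * (\<epsilon> * (real n powr \<eta> * z))\<^sup>2 / real n)"
    unfolding count_deviation_event_def using assms St_distr
    by (intro state_count_hoeffding indep_vars_subset[OF St_indep]) auto
  also have "exp (-2 * (\<epsilon> * (real n powr \<eta> * z))\<^sup>2 / real n) \<le> exp (- ((2 * \<epsilon>\<^sup>2) * z\<^sup>2))"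
  proof -
    have "real n = real n powr 1" using assms(1) by simp
    also have "\<dots> \<le> real n powr (2 * \<eta>)" using assms(1) \<eta>_ge by (intro powr_mono) auto
    also have "\<dots> = (real n powr \<eta>)\<^sup>2" by (simp add: power2_eq_square flip: powr_add)
    finally have "(2 * \<epsilon>\<^sup>2 * z\<^sup>2) * real n \<le> (2 * \<epsilon>\<^sup>2 * z\<^sup>2) * (real n powr \<eta>)\<^sup>2"
      by (intro mult_left_mono) auto
    also have "\<dots> = 2 * (\<epsilon> * (real n powr \<eta> * z))\<^sup>2"
      by (simp add: power_mult_distrib)
    finally show ?thesis using assms(1) by (simp add: field_simps)
  qed
  also have "exp (- ((2 * \<epsilon>\<^sup>2) * z\<^sup>2)) \<le> (\<xi> / 2 / (2 * \<epsilon>\<^sup>2)) powr (\<xi> / 2) / z powr (2 * (\<xi> / 2))"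
    using assms \<xi>_gt_1 by (intro exp_neg_mult_square_le) auto
  finally show ?thesis by simp
qed

lemma arm_deviation_scale_ge_1: "deviation_scale (real CARD('s)) \<beta> (Rc + Rx) \<ge> 1"
  using c_bound Rx_nonneg \<beta>_pos by (intro deviation_scale_ge_1) auto

lemma rho_hat_deviation_imp_large_summand:
  assumes "\<omega> \<in> space M" "n \<ge> 1"
    and "real n powr \<eta> * z \<le> real n * \<bar>rho_hat \<beta> \<gamma> c x St n \<omega> - erm_arm \<beta> \<gamma> c P muS\<bar>"
  shows "\<exists>s. 2 * (\<beta> / deviation_scale (real CARD('s)) \<beta> (Rc + Rx) * (real n powr \<eta> * z))
    \<le> \<beta> * real (state_count St s n \<omega>) * \<bar>rho_hat_state \<beta> \<gamma> x s (state_count St s n \<omega>) \<omega> - muS s\<bar>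
      + \<bar>real (state_count St s n \<omega>) - real n * pmf P s\<bar>"
proof -
  define K where "K = exp (2 * \<beta> * (Rc + Rx)) / \<beta>"
  have "K > 0" using \<beta>_pos by (simp add: K_def)
  have "real n powr \<eta> * z
      \<le> K * (\<Sum>s\<in>UNIV. \<beta> * real (state_count St s n \<omega>) *
              \<bar>rho_hat_state \<beta> \<gamma> x s (state_count St s n \<omega>) \<omega> - muS s\<bar>
            + \<bar>real (state_count St s n \<omega>) - real n * pmf P s\<bar>)"
    using assms(3) rho_hat_deviation_le[where x=x and muS=muS and P=P and St=St,
        OF \<beta>_pos \<gamma>_pos \<gamma>_le_1 c_bound assms(2) x_bound[OF assms(1)] muS_bound]
    unfolding K_def by linarith
  then have "real n powr \<eta> * z / K
      \<le> (\<Sum>s\<in>UNIV. \<beta> * real (state_count St s n \<omega>) *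
              \<bar>rho_hat_state \<beta> \<gamma> x s (state_count St s n \<omega>) \<omega> - muS s\<bar>
            + \<bar>real (state_count St s n \<omega>) - real n * pmf P s\<bar>)"
    using \<open>K > 0\<close> by (simp add: divide_le_eq mult.commute)
  from sum_ge_imp_summand_ge[OF _ _ this] obtain s where
    "real n powr \<eta> * z / K / real CARD('s)
      \<le> \<beta> * real (state_count St s n \<omega>) * \<bar>rho_hat_state \<beta> \<gamma> x s (state_count St s n \<omega>) \<omega> - muS s\<bar>
        + \<bar>real (state_count St s n \<omega>) - real n * pmf P s\<bar>"
    by auto
  moreover have "real n powr \<eta> * z / K / real CARD('s) = 2 * (\<beta> / deviation_scale (real CARD('s)) \<beta> (Rc + Rx) * (real n powr \<eta> * z))"
    using \<beta>_pos by (simp add: K_def deviation_scale_def field_simps)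
  ultimately show ?thesis by auto
qed

lemma rho_hat_deviation_cases:
  assumes "\<omega> \<in> space M" "n \<ge> 1" "z > 0"
    and "real n powr \<eta> * z \<le> real n * \<bar>rho_hat \<beta> \<gamma> c x St n \<omega> - erm_arm \<beta> \<gamma> c P muS\<bar>"
  shows "\<exists>s. \<omega> \<in> bad_state_event s n z"
proof -
  define Q where "Q = deviation_scale (real CARD('s)) \<beta> (Rc + Rx)"
  define u where "u = \<beta> / Q * (real n powr \<eta> * z)"
  define T where "T s = state_count St s n \<omega>" for s
  have "Q > 0" using arm_deviation_scale_ge_1 by (simp add: Q_def)
  obtain s where "2 * u \<le> \<beta> * real (T s) * \<bar>rho_hat_state \<beta> \<gamma> x s (T s) \<omega> - muS s\<bar>
                          + \<bar>real (T s) - real n * pmf P s\<bar>"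
    using rho_hat_deviation_imp_large_summand[OF assms(1,2,4)] unfolding u_def Q_def T_def by blast
  then consider "u \<le> \<beta> * real (T s) * \<bar>rho_hat_state \<beta> \<gamma> x s (T s) \<omega> - muS s\<bar>"
    | "u \<le> \<bar>real (T s) - real n * pmf P s\<bar>"
    by linarith
  then show ?thesis
  proof cases
    case 1
    have "0 < u" using assms(2,3) \<beta>_pos \<open>Q > 0\<close> by (simp add: u_def)
    with 1 have "T s \<noteq> 0" by (metis mult_zero_left mult_zero_right not_le of_nat_0)
    moreover have "T s \<le> n" by (simp add: T_def state_count_le)
    moreover have "real (T s) powr \<eta> * (z / Q) \<le> real n powr \<eta> * (z / Q)"
      using \<open>T s \<le> n\<close> \<eta>_ge assms(3) \<open>Q > 0\<close> by (intro mult_right_mono powr_mono2) auto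
    moreover have "real n powr \<eta> * (z / Q) = u / \<beta>"
      using \<beta>_pos by (simp add: u_def)
    moreover have "u / \<beta> \<le> real (T s) * \<bar>rho_hat_state \<beta> \<gamma> x s (T s) \<omega> - muS s\<bar>"
      using 1 \<beta>_pos by (simp add: divide_le_eq mult.assoc mult.commute)
    ultimately have "T s \<in> {1..n}" "\<omega> \<in> count_event s n (T s) \<inter> state_deviation_event s (T s) (z / Q)"
      using assms(1) by (auto simp: count_event_def state_deviation_event_def T_def)
    then show ?thesis unfolding bad_state_event_def Q_def by blast
  next
    case 2
    then show ?thesis
      using assms(1) by (auto simp: bad_state_event_def count_deviation_event_def u_def T_def Q_def)
  qed
qed

lemma state_count_measurable [measurable]:
  "(\<lambda>\<omega>. real (state_count St s n \<omega>)) \<in> borel_measurable M"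
  using St_measurable by (intro state_count_borel_measurable) auto

lemma rho_hat_measurable [measurable]: "(\<lambda>\<omega>. rho_hat \<beta> \<gamma> c x St n \<omega>) \<in> borel_measurable M"
  using x_measurable St_measurable by (intro rho_hat_borel_measurable) auto

lemma count_deviation_event_sets: "count_deviation_event s n \<epsilon> \<in> events"
  unfolding count_deviation_event_def by measurable

lemma bad_state_event_sets: "bad_state_event s n z \<in> events"
  unfolding bad_state_event_def
  using count_event_sets state_deviation_event_sets count_deviation_event_sets by auto

lemma prob_bad_state_event_le:
  assumes "z \<ge> deviation_scale (real CARD('s)) \<beta> (Rc + Rx)" "n \<ge> 1"
  shows "prob (bad_state_event s n z)
    \<le> tail_const (real CARD('s)) \<beta> (Rc + Rx) \<theta> \<xi> / real CARD('s) / z powr \<xi>"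
proof -
  define Q where "Q = deviation_scale (real CARD('s)) \<beta> (Rc + Rx)"
  have "Q > 0" using arm_deviation_scale_ge_1 by (simp add: Q_def)
  let ?V = "\<Union>m\<in>{1..n}. count_event s n m \<inter> state_deviation_event s m (z / Q)"
  let ?B = "count_deviation_event s n (\<beta> / Q * (real n powr \<eta> * z))"
  have "prob ?V \<le> 2 * \<theta> / (z / Q) powr \<xi>"
    using assms(1) \<open>Q > 0\<close> by (intro prob_state_deviation_at_count_le) (auto simp: Q_def)
  also have "\<dots> = 2 * \<theta> * Q powr \<xi> / z powr \<xi>"
    using \<open>Q > 0\<close> assms(1) by (simp add: powr_divide)
  finally have "prob ?V \<le> 2 * \<theta> * Q powr \<xi> / z powr \<xi>" .
  moreover have "prob ?B \<le> 2 * (\<xi> / (4 * (\<beta> / Q)\<^sup>2)) powr (\<xi> / 2) / z powr \<xi>"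
    using assms \<beta>_pos \<open>Q > 0\<close> arm_deviation_scale_ge_1
    by (intro prob_count_deviation_le) (auto simp: Q_def)
  moreover have "prob (bad_state_event s n z) \<le> prob ?V + prob ?B"
    unfolding bad_state_event_def Q_def
    using count_event_sets state_deviation_event_sets count_deviation_event_sets
    by (intro measure_Un_le) auto
  ultimately show ?thesis
    by (simp add: tail_const_def add_divide_distrib Q_def)
qed

lemma prob_rho_hat_deviation_le:
  assumes "z \<ge> 1" "n \<ge> 1"
  shows "prob {\<omega> \<in> space M. real n powr \<eta> * z
               \<le> real n * \<bar>rho_hat \<beta> \<gamma> c x St n \<omega> - erm_arm \<beta> \<gamma> c P muS\<bar>}
    \<le> tail_const (real CARD('s)) \<beta> (Rc + Rx) \<theta> \<xi> / z powr \<xi>"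
    (is "prob ?D \<le> ?TL / _")
proof -
  define Q where "Q = deviation_scale (real CARD('s)) \<beta> (Rc + Rx)"
  show ?thesis
  proof (cases "z < Q")
    case True
    have "z powr \<xi> \<le> Q powr \<xi>" using True assms(1) \<xi>_gt_1 by (intro powr_mono2) auto
    also have "\<dots> \<le> (2 * \<theta>) * Q powr \<xi>"
      using \<theta>_gt_1 mult_right_mono[of 1 "2 * \<theta>" "Q powr \<xi>"] by simp
    also have "\<dots> \<le> ?TL" using \<theta>_gt_1 unfolding Q_def by (intro tail_const_ge) auto
    finally have "1 \<le> ?TL / z powr \<xi>" using assms(1) by simp
    then show ?thesis using prob_le_1[of ?D] by linarith
  next
    case False
    have "?D \<subseteq> (\<Union>s. bad_state_event s n z)"
      using rho_hat_deviation_cases[OF _ assms(2)] assms(1) by fastforce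
    then have "prob ?D \<le> prob (\<Union>s. bad_state_event s n z)"
      using bad_state_event_sets by (intro finite_measure_mono) auto
    also have "\<dots> \<le> (\<Sum>s\<in>UNIV. prob (bad_state_event s n z))"
      using bad_state_event_sets by (intro finite_measure_subadditive_finite) auto
    also have "\<dots> \<le> (\<Sum>s\<in>(UNIV :: 's set). ?TL / real CARD('s) / z powr \<xi>)"
      using False assms(2) by (intro sum_mono prob_bad_state_event_le) (auto simp: Q_def)
    also have "\<dots> = ?TL / z powr \<xi>"
      by simp
    finally show ?thesis .
  qed
qed

lemma prob_rho_hat_one_sided_le:
  assumes "z \<ge> 1" "n \<ge> 1"
  shows "prob {\<omega> \<in> space M. real n * rho_hat \<beta> \<gamma> c x St n \<omega> - real n * erm_arm \<beta> \<gamma> c P muS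
                \<ge> real n powr \<eta> * z} \<le> tail_const (real CARD('s)) \<beta> (Rc + Rx) \<theta> \<xi> / z powr \<xi>"
    and "prob {\<omega> \<in> space M. real n * rho_hat \<beta> \<gamma> c x St n \<omega> - real n * erm_arm \<beta> \<gamma> c P muS
                \<le> - (real n powr \<eta> * z)} \<le> tail_const (real CARD('s)) \<beta> (Rc + Rx) \<theta> \<xi> / z powr \<xi>"
proof -
  let ?D = "{\<omega> \<in> space M. real n powr \<eta> * z
              \<le> real n * \<bar>rho_hat \<beta> \<gamma> c x St n \<omega> - erm_arm \<beta> \<gamma> c P muS\<bar>}"
  have "?D \<in> events" by measurable
  then have bound: "prob A \<le> tail_const (real CARD('s)) \<beta> (Rc + Rx) \<theta> \<xi> / z powr \<xi>"
    if "A \<subseteq> ?D" for A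
    using finite_measure_mono[OF that] prob_rho_hat_deviation_le[OF assms] by linarith
  show "prob {\<omega> \<in> space M. real n * rho_hat \<beta> \<gamma> c x St n \<omega> - real n * erm_arm \<beta> \<gamma> c P muS
                \<ge> real n powr \<eta> * z} \<le> tail_const (real CARD('s)) \<beta> (Rc + Rx) \<theta> \<xi> / z powr \<xi>"
    by (rule bound) (auto simp only: of_nat_mult_abs_diff intro: order_trans[OF _ abs_ge_self])
  show "prob {\<omega> \<in> space M. real n * rho_hat \<beta> \<gamma> c x St n \<omega> - real n * erm_arm \<beta> \<gamma> c P muS
                \<le> - (real n powr \<eta> * z)} \<le> tail_const (real CARD('s)) \<beta> (Rc + Rx) \<theta> \<xi> / z powr \<xi>"
    by (rule bound) (auto simp only: of_nat_mult_abs_diff intro: order_trans[OF _ abs_ge_minus_self])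
qed

lemma abs_rho_hat_minus_erm_arm_le:
  assumes "n \<ge> 1" "\<omega> \<in> space M"
  shows "\<bar>rho_hat \<beta> \<gamma> c x St n \<omega> - erm_arm \<beta> \<gamma> c P muS\<bar> \<le> 2 * (Rc + Rx)"
proof -
  have "\<bar>rho_hat_state \<beta> \<gamma> x s m \<omega>\<bar> \<le> Rx" for s m
    using \<beta>_pos \<gamma>_pos x_bound[OF assms(2)] by (rule abs_rho_hat_state_le)
  then have "\<bar>rho_hat \<beta> \<gamma> c x St n \<omega>\<bar> \<le> Rc + Rx"
    unfolding rho_hat_eq_entropic_risk[OF \<beta>_pos \<gamma>_pos]
    using \<beta>_pos \<gamma>_pos \<gamma>_le_1 c_bound sum_state_count_div[OF assms(1)]
    by (intro abs_entropic_risk_le abs_add_scaled_le) auto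
  moreover have "\<bar>erm_arm \<beta> \<gamma> c P muS\<bar> \<le> Rc + Rx"
    unfolding erm_arm_eq_entropic_risk
    using \<beta>_pos \<gamma>_pos \<gamma>_le_1 c_bound muS_bound sum_pmf_eq_1[of UNIV P]
    by (intro abs_entropic_risk_le abs_add_scaled_le) auto
  ultimately show ?thesis
    unfolding mult_2 by (rule order_trans[OF abs_triangle_ineq4 add_mono])
qed

lemma expectation_rho_hat_tendsto:
  "(\<lambda>n. expectation (rho_hat \<beta> \<gamma> c x St n)) \<longlonglongrightarrow> erm_arm \<beta> \<gamma> c P muS"
  using \<eta>_lt_1 \<xi>_gt_1 abs_rho_hat_minus_erm_arm_le prob_rho_hat_deviation_le
  by (intro expectation_tendsto_of_tail_bound) auto

end

theorem lemma3:
  fixes \<theta> \<xi> \<eta> \<beta> Rc Rx :: real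
  assumes "\<theta> > 1" and "\<xi> > 1" and "1/2 \<le> \<eta>" and "\<eta> < 1"
    and "\<beta> > 0" and "Rc \<ge> 0" and "Rx \<ge> 0"
  shows "\<exists>\<theta>L > 1. \<forall>(M :: 'w measure) \<gamma> c (P :: 's::finite pmf) x St muS.
           arm_model M \<gamma> Rc Rx c P x St \<and> state_assm M \<beta> \<gamma> x muS \<theta> \<xi> \<eta> \<longrightarrow>
           ((\<lambda>n. integral\<^sup>L M (rho_hat \<beta> \<gamma> c x St n))
               \<longlonglongrightarrow> erm_arm \<beta> \<gamma> c P muS) \<and>
           (\<forall>z n. z \<ge> 1 \<longrightarrow> n \<ge> 1 \<longrightarrow>
              measure M {\<omega> \<in> space M. real n * rho_hat \<beta> \<gamma> c x St n \<omega>
                          - real n * erm_arm \<beta> \<gamma> c P muS \<ge> real n powr \<eta> * z}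
                \<le> \<theta>L / z powr \<xi> \<and>
              measure M {\<omega> \<in> space M. real n * rho_hat \<beta> \<gamma> c x St n \<omega>
                          - real n * erm_arm \<beta> \<gamma> c P muS \<le> - (real n powr \<eta> * z)}
                \<le> \<theta>L / z powr \<xi>)"
proof (intro exI[of _ "tail_const (real CARD('s)) \<beta> (Rc + Rx) \<theta> \<xi>"] conjI allI impI)
  show "tail_const (real CARD('s)) \<beta> (Rc + Rx) \<theta> \<xi> > 1"
    using assms by (intro tail_const_gt_1) auto
  fix M :: "'w measure" and \<gamma> c and P :: "'s pmf" and x St muS
  assume "arm_model M \<gamma> Rc Rx c P x St \<and> state_assm M \<beta> \<gamma> x muS \<theta> \<xi> \<eta>"
  then interpret bandit_arm M \<beta> \<gamma> Rc Rx c P x St muS \<theta> \<xi> \<eta>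
    using assms unfolding arm_model_def state_assm_def bandit_arm_def bandit_arm_axioms_def by auto
  show "(\<lambda>n. expectation (rho_hat \<beta> \<gamma> c x St n)) \<longlonglongrightarrow> erm_arm \<beta> \<gamma> c P muS"
    by (rule expectation_rho_hat_tendsto)
  fix z :: real and n :: nat
  assume "z \<ge> 1" "n \<ge> 1"
  then show "prob {\<omega> \<in> space M. real n * rho_hat \<beta> \<gamma> c x St n \<omega> - real n * erm_arm \<beta> \<gamma> c P muS
                \<ge> real n powr \<eta> * z} \<le> tail_const (real CARD('s)) \<beta> (Rc + Rx) \<theta> \<xi> / z powr \<xi>"
    and "prob {\<omega> \<in> space M. real n * rho_hat \<beta> \<gamma> c x St n \<omega> - real n * erm_arm \<beta> \<gamma> c P muS
                \<le> - (real n powr \<eta> * z)} \<le> tail_const (real CARD('s)) \<beta> (Rc + Rx) \<theta> \<xi> / z powr \<xi>"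
    by (rule prob_rho_hat_one_sided_le)+
qed

end
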